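(* Let $\mathcal{G}$ be a finite groupoid and let $\mathcal{H}$ and $\mathcal{K}$ be connected wide subgroupoids of $\mathcal{G}$. Then \[|\mathcal{H}\backslash\mathcal{G}/\mathcal{K}|=\langle \chi_{\mathrm{Ind}^\mathcal{G}_\mathcal{H}\mathrm{Tri}},\ \chi_{\mathrm{Ind}^\mathcal{G}_\mathcal{K}\mathrm{Tri}}\rangle.\]
   Context: A groupoid is a category in which every morphism is invertible; all groupoids are finite and nonempty; $\mathcal{C}_0,\mathcal{C}_1$ denote objects and morphisms, $\mathcal{C}_x:=\mathcal{C}(x,x)$ the isotropy group, and $gg'$ the composite $g\circ g'$. A subgroupoid is wide if it contains all objects, connected if any two of its objects are joined by one of its morphisms. For subgroupoids $\mathcal{H},\mathcal{K}$ and $g\in\mathcal{G}_1$, $\mathcal{H}g\mathcal{K}:=\{hgk\mid h\in\mathcal{H}_1,k\in\mathcal{K}_1,\mathrm{dom}\,h=\mathrm{cod}\,g,\mathrm{cod}\,k=\mathrm{dom}\,g\}$, and $\mathcal{H}\backslash\mathcal{G}/\mathcal{K}$ is the set of all such double cosets. A linear representation of a groupoid $\mathcal{C}$ is a functor $\mathcal{C}\to\mathbf{vect}$ (finite-dimensional complex vector spaces). $\mathrm{Tri}:\mathcal{H}\to\mathbf{vect}$ is the trivial representation ($x\mapsto\mathbb{C}$, every morphism $\mapsto\mathrm{id}_\mathbb{C}$). $\mathrm{Ind}^\mathcal{G}_\mathcal{H}:\mathbf{vect}^\mathcal{H}\to\mathbf{vect}^\mathcal{G}$ is the left adjoint of restriction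 along the inclusion $\mathcal{H}\hookrightarrow\mathcal{G}$ (left Kan extension along the inclusion). For a representation $R$ of $\mathcal{G}$ with representation space $V=\bigoplus_{x\in\mathcal{G}_0}R(x)$, and a morphism $g:x\to y$, let $\hat R(g):V\to V$ be the linear map that is $R(g):R(x)\to R(y)$ on the summand $R(x)$ and zero on the other summands; the character is $\chi_R:\mathcal{G}_1\to\mathbb{C}$, $\chi_R(g):=\mathrm{tr}(\hat R(g))$. The inner product of characters is $\langle\chi_R,\chi_{R'}\rangle:=\frac{1}{|\mathcal{G}_0|}\sum_{x\in\mathcal{G}_0}\langle\chi_R|_{\mathcal{G}_x},\chi_{R'}|_{\mathcal{G}_x}\rangle$, where for functions on the group $\mathcal{G}_x$, $\langle\alpha,\beta\rangle=\frac{1}{|\mathcal{G}_x|}\sum_{g\in\mathcal{G}_x}\alpha(g)\overline{\beta(g)}$. *)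

theory Defs
  imports Complex_Main "Jordan_Normal_Form.Matrix"
begin

text \<open>A groupoid given by its object set, morphism set, domain, codomain,
  composition (cmp g h = g o h, defined when gdom g = gcod h) and identities.\<close>

record ('o, 'm) gpd =
  obj :: "'o set"
  mor :: "'m set"
  gdom :: "'m \<Rightarrow> 'o"
  gcod :: "'m \<Rightarrow> 'o"
  cmp :: "'m \<Rightarrow> 'm \<Rightarrow> 'm"
  idn :: "'o \<Rightarrow> 'm"

definition groupoid :: "('o, 'm) gpd \<Rightarrow> bool" where
  "groupoid C \<longleftrightarrow>
     finite (obj C) \<and> finite (mor C) \<and> obj C \<noteq> {} \<and>
     (\<forall>g\<in>mor C. gdom C g \<in> obj C \<and> gcod C g \<in> obj C) \<and>
     (\<forall>x\<in>obj C. idn C x \<in> mor C \<and> gdom C (idn C x) = x \<and> gcod C (idn C x) = x) \<and>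
     (\<forall>g\<in>mor C. \<forall>h\<in>mor C. gdom C g = gcod C h \<longrightarrow>
        cmp C g h \<in> mor C \<and> gdom C (cmp C g h) = gdom C h \<and> gcod C (cmp C g h) = gcod C g) \<and>
     (\<forall>f\<in>mor C. \<forall>g\<in>mor C. \<forall>h\<in>mor C. gdom C f = gcod C g \<and> gdom C g = gcod C h \<longrightarrow>
        cmp C (cmp C f g) h = cmp C f (cmp C g h)) \<and>
     (\<forall>g\<in>mor C. cmp C (idn C (gcod C g)) g = g \<and> cmp C g (idn C (gdom C g)) = g) \<and>
     (\<forall>g\<in>mor C. \<exists>g'\<in>mor C. gdom C g' = gcod C g \<and> gcod C g' = gdom C g \<and>
        cmp C g' g = idn C (gdom C g) \<and> cmp C g g' = idn C (gcod C g))"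

definition subgroupoid :: "('o, 'm) gpd \<Rightarrow> ('o, 'm) gpd \<Rightarrow> bool" where
  "subgroupoid G H \<longleftrightarrow> groupoid H \<and> obj H \<subseteq> obj G \<and> mor H \<subseteq> mor G \<and>
     gdom H = gdom G \<and> gcod H = gcod G \<and> cmp H = cmp G \<and> idn H = idn G"

definition wide_subgroupoid :: "('o, 'm) gpd \<Rightarrow> ('o, 'm) gpd \<Rightarrow> bool" where
  "wide_subgroupoid G H \<longleftrightarrow> subgroupoid G H \<and> obj H = obj G"

definition connected_gpd :: "('o, 'm) gpd \<Rightarrow> bool" where
  "connected_gpd C \<longleftrightarrow> (\<forall>x\<in>obj C. \<forall>y\<in>obj C. \<exists>g\<in>mor C. gdom C g = x \<and> gcod C g = y)"

definition isotropy :: "('o, 'm) gpd \<Rightarrow> 'o \<Rightarrow> 'm set" where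
  "isotropy C x = {g \<in> mor C. gdom C g = x \<and> gcod C g = x}"

definition double_coset :: "('o, 'm) gpd \<Rightarrow> ('o, 'm) gpd \<Rightarrow> 'm \<Rightarrow> ('o, 'm) gpd \<Rightarrow> 'm set" where
  "double_coset G H g K = {cmp G (cmp G h g) k | h k. h \<in> mor H \<and> k \<in> mor K \<and>
       gdom G h = gcod G g \<and> gcod G k = gdom G g}"

definition double_cosets :: "('o, 'm) gpd \<Rightarrow> ('o, 'm) gpd \<Rightarrow> ('o, 'm) gpd \<Rightarrow> 'm set set" where
  "double_cosets G H K = {double_coset G H g K | g. g \<in> mor G}"

text \<open>A representation of C in vect, up to choosing bases: each object x goes to
  the space complex^(d x), each morphism g to a (d (gcod g)) x (d (gdom g)) matrix.\<close>

definition is_rep :: "('o, 'm) gpd \<Rightarrow> ('o \<Rightarrow> nat) \<Rightarrow> ('m \<Rightarrow> complex mat) \<Rightarrow> bool" where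
  "is_rep C d R \<longleftrightarrow>
     (\<forall>g\<in>mor C. R g \<in> carrier_mat (d (gcod C g)) (d (gdom C g))) \<and>
     (\<forall>x\<in>obj C. R (idn C x) = 1\<^sub>m (d x)) \<and>
     (\<forall>g\<in>mor C. \<forall>h\<in>mor C. gdom C g = gcod C h \<longrightarrow> R (cmp C g h) = R g * R h)"

definition nat_trans :: "('o, 'm) gpd \<Rightarrow> ('o \<Rightarrow> nat) \<Rightarrow> ('m \<Rightarrow> complex mat)
    \<Rightarrow> ('o \<Rightarrow> nat) \<Rightarrow> ('m \<Rightarrow> complex mat) \<Rightarrow> ('o \<Rightarrow> complex mat) \<Rightarrow> bool" where
  "nat_trans C d R e S \<eta> \<longleftrightarrow>
     (\<forall>x\<in>obj C. \<eta> x \<in> carrier_mat (e x) (d x)) \<and>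
     (\<forall>g\<in>mor C. S g * \<eta> (gdom C g) = \<eta> (gcod C g) * R g)"

definition triv_dim :: "'o \<Rightarrow> nat" where "triv_dim x = 1"
definition triv_rep :: "'m \<Rightarrow> complex mat" where "triv_rep g = 1\<^sub>m 1"

text \<open>(dI, I) together with the unit eta is Ind^G_H (d, R): the value of the left
  adjoint of restriction, characterised by its universal property (universal arrow
  from (d,R) to the restriction functor).\<close>

definition is_induction :: "('o, 'm) gpd \<Rightarrow> ('o, 'm) gpd \<Rightarrow> ('o \<Rightarrow> nat) \<Rightarrow> ('m \<Rightarrow> complex mat)
    \<Rightarrow> ('o \<Rightarrow> nat) \<Rightarrow> ('m \<Rightarrow> complex mat) \<Rightarrow> ('o \<Rightarrow> complex mat) \<Rightarrow> bool" where
  "is_induction G H d R dI I \<eta> \<longleftrightarrow>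
     is_rep H d R \<and> is_rep G dI I \<and> nat_trans H d R dI I \<eta> \<and>
     (\<forall>(e :: 'o \<Rightarrow> nat) (S :: 'm \<Rightarrow> complex mat) f.
        is_rep G e S \<and> nat_trans H d R e S f \<longrightarrow>
          (\<exists>\<phi>. nat_trans G dI I e S \<phi> \<and> (\<forall>x\<in>obj H. \<phi> x * \<eta> x = f x)) \<and>
          (\<forall>\<phi> \<psi>. nat_trans G dI I e S \<phi> \<and> (\<forall>x\<in>obj H. \<phi> x * \<eta> x = f x) \<and>
                   nat_trans G dI I e S \<psi> \<and> (\<forall>x\<in>obj H. \<psi> x * \<eta> x = f x)
                   \<longrightarrow> (\<forall>x\<in>obj G. \<phi> x = \<psi> x)))"

text \<open>The representation space V is the direct sum of the complex^(d x), with
  standard basis indexed by pairs (x, i), i < d x.\<close>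

definition rep_basis :: "('o, 'm) gpd \<Rightarrow> ('o \<Rightarrow> nat) \<Rightarrow> ('o \<times> nat) set" where
  "rep_basis C d = {(x, i). x \<in> obj C \<and> i < d x}"

text \<open>Matrix entry ((y,j),(x,i)) of the map hat R g : V -> V.\<close>

definition rep_hat :: "('o, 'm) gpd \<Rightarrow> ('m \<Rightarrow> complex mat) \<Rightarrow> 'm
    \<Rightarrow> ('o \<times> nat) \<Rightarrow> ('o \<times> nat) \<Rightarrow> complex" where
  "rep_hat C R g = (\<lambda>(y, j) (x, i).
     if x = gdom C g \<and> y = gcod C g then R g $$ (j, i) else 0)"

definition character :: "('o, 'm) gpd \<Rightarrow> ('o \<Rightarrow> nat) \<Rightarrow> ('m \<Rightarrow> complex mat) \<Rightarrow> 'm \<Rightarrow> complex" where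
  "character C d R g = (\<Sum>b\<in>rep_basis C d. rep_hat C R g b b)"

definition char_inner :: "('o, 'm) gpd \<Rightarrow> ('m \<Rightarrow> complex) \<Rightarrow> ('m \<Rightarrow> complex) \<Rightarrow> complex" where
  "char_inner C \<alpha> \<beta> = (1 / of_nat (card (obj C))) *
     (\<Sum>x\<in>obj C. (1 / of_nat (card (isotropy C x))) *
        (\<Sum>g\<in>isotropy C x. \<alpha> g * cnj (\<beta> g)))"

end

theory Submission
  imports Defs "HOL-Algebra.Group_Action"
begin

(*
  For a wide connected subgroupoid H, the induced representation Ind Tri is the permutation
  representation of G on left cosets: its fibre over y has a basis indexed by the cosets aH
  with cod a = y, and g acts by aH |-> gaH.  We build this representation explicitly; the
  universal property of induction gives a comparison map from any model (I, eta) to it, whose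
  inverse sends the basis vector of aH to I(a) eta(dom a).  Hence for g in the isotropy group
  G_y the character of I at g is the number of cosets fixed by g.

  The summand at y of the inner product is therefore (1/|G_y|) sum_g |Fix_H(g)| |Fix_K(g)|,
  which by Burnside's lemma counts the G_y-orbits on pairs (aH, bK) over y.  The map
  (aH, bK) |-> H a^-1 b K identifies these orbits with the double cosets (onto because H is
  connected), so every object contributes |H\G/K| and so does their average.
*)

definition ginv :: "('o, 'm) gpd \<Rightarrow> 'm \<Rightarrow> 'm" where
  "ginv C g = (SOME g'. g' \<in> mor C \<and> gdom C g' = gcod C g \<and> gcod C g' = gdom C g \<and>
     cmp C g' g = idn C (gdom C g) \<and> cmp C g g' = idn C (gcod C g))"

locale finite_groupoid =
  fixes G :: "('o, 'm) gpd"
  assumes groupoid: "groupoid G"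
begin

lemma finite_obj: "finite (obj G)"
  and finite_mor: "finite (mor G)"
  and obj_nonempty: "obj G \<noteq> {}"
  using groupoid unfolding groupoid_def by auto

lemma dom_in_obj [simp]: "g \<in> mor G \<Longrightarrow> gdom G g \<in> obj G"
  and cod_in_obj [simp]: "g \<in> mor G \<Longrightarrow> gcod G g \<in> obj G"
  using groupoid unfolding groupoid_def by auto

lemma idn_in_mor [simp]: "x \<in> obj G \<Longrightarrow> idn G x \<in> mor G"
  and dom_idn [simp]: "x \<in> obj G \<Longrightarrow> gdom G (idn G x) = x"
  and cod_idn [simp]: "x \<in> obj G \<Longrightarrow> gcod G (idn G x) = x"
  using groupoid unfolding groupoid_def by auto

lemma cmp_in_mor [simp]:
    "g \<in> mor G \<Longrightarrow> h \<in> mor G \<Longrightarrow> gdom G g = gcod G h \<Longrightarrow> cmp G g h \<in> mor G"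
  and dom_cmp [simp]:
    "g \<in> mor G \<Longrightarrow> h \<in> mor G \<Longrightarrow> gdom G g = gcod G h \<Longrightarrow> gdom G (cmp G g h) = gdom G h"
  and cod_cmp [simp]:
    "g \<in> mor G \<Longrightarrow> h \<in> mor G \<Longrightarrow> gdom G g = gcod G h \<Longrightarrow> gcod G (cmp G g h) = gcod G g"
  using groupoid unfolding groupoid_def by auto

lemma assoc:
  "f \<in> mor G \<Longrightarrow> g \<in> mor G \<Longrightarrow> h \<in> mor G \<Longrightarrow> gdom G f = gcod G g \<Longrightarrow> gdom G g = gcod G h
   \<Longrightarrow> cmp G (cmp G f g) h = cmp G f (cmp G g h)"
  using groupoid unfolding groupoid_def by blast

lemma idn_left [simp]: "g \<in> mor G \<Longrightarrow> gcod G g = x \<Longrightarrow> cmp G (idn G x) g = g"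
  and idn_right [simp]: "g \<in> mor G \<Longrightarrow> gdom G g = x \<Longrightarrow> cmp G g (idn G x) = g"
  using groupoid unfolding groupoid_def by auto

lemma ginv:
  assumes "g \<in> mor G"
  shows "ginv G g \<in> mor G \<and> gdom G (ginv G g) = gcod G g \<and> gcod G (ginv G g) = gdom G g \<and>
    cmp G (ginv G g) g = idn G (gdom G g) \<and> cmp G g (ginv G g) = idn G (gcod G g)"
  unfolding ginv_def by (rule someI_ex) (use assms groupoid in \<open>auto simp: groupoid_def\<close>)

lemma ginv_in_mor [simp]: "g \<in> mor G \<Longrightarrow> ginv G g \<in> mor G"
  and dom_ginv [simp]: "g \<in> mor G \<Longrightarrow> gdom G (ginv G g) = gcod G g"
  and cod_ginv [simp]: "g \<in> mor G \<Longrightarrow> gcod G (ginv G g) = gdom G g"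
  and ginv_left [simp]: "g \<in> mor G \<Longrightarrow> cmp G (ginv G g) g = idn G (gdom G g)"
  and ginv_right [simp]: "g \<in> mor G \<Longrightarrow> cmp G g (ginv G g) = idn G (gcod G g)"
  using ginv by auto

lemma ginv_cmp_cancel [simp]:
  assumes "a \<in> mor G" "m \<in> mor G" "gcod G m = gdom G a"
  shows "cmp G (ginv G a) (cmp G a m) = m"
  using assoc[of "ginv G a" a m] assms by simp

lemma cmp_ginv_cancel [simp]:
  assumes "a \<in> mor G" "m \<in> mor G" "gcod G m = gcod G a"
  shows "cmp G a (cmp G (ginv G a) m) = m"
  using assoc[of a "ginv G a" m] assms by simp

lemma cmp_cmp_ginv_cancel [simp]:
  assumes "a \<in> mor G" "m \<in> mor G" "gdom G m = gcod G a"
  shows "cmp G (cmp G m a) (ginv G a) = m"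
  using assoc[of m a "ginv G a"] assms by simp

lemma ginv_cmp:
  assumes g: "g \<in> mor G" and h: "h \<in> mor G" and gh: "gdom G g = gcod G h"
  shows "ginv G (cmp G g h) = cmp G (ginv G h) (ginv G g)"
proof -
  have "cmp G (cmp G g h) (cmp G (ginv G h) (ginv G g)) = idn G (gcod G g)"
    using g h gh by (simp add: assoc)
  then show ?thesis
    using ginv_cmp_cancel[of "cmp G g h" "cmp G (ginv G h) (ginv G g)"] g h gh by simp
qed

lemma isotropy_iff: "g \<in> isotropy G y \<longleftrightarrow> g \<in> mor G \<and> gdom G g = y \<and> gcod G g = y"
  unfolding isotropy_def by simp

lemma finite_isotropy: "finite (isotropy G y)"
  unfolding isotropy_def using finite_mor by simp

lemma card_isotropy_pos:
  assumes "y \<in> obj G"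
  shows "card (isotropy G y) > 0"
proof -
  have "idn G y \<in> isotropy G y" using assms by (simp add: isotropy_iff)
  then show ?thesis using finite_isotropy[of y] by (auto simp: card_gt_0_iff)
qed

end

section \<open>Traces, representations and characters\<close>

definition mat_trace :: "'a :: comm_monoid_add mat \<Rightarrow> 'a" where
  "mat_trace A = (\<Sum>i = 0..<dim_row A. A $$ (i, i))"

lemma index_mult_mat_sum:
  assumes "A \<in> carrier_mat n m" "B \<in> carrier_mat m p" "i < n" "j < p"
  shows "(A * B) $$ (i, j) = (\<Sum>k = 0..<m. A $$ (i, k) * B $$ (k, j))"
  using assms by (simp add: scalar_prod_def)

lemma mat_trace_mult_comm:
  fixes A B :: "'a :: comm_semiring_0 mat"
  assumes A: "A \<in> carrier_mat n m" and B: "B \<in> carrier_mat m n"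
  shows "mat_trace (A * B) = mat_trace (B * A)"
proof -
  have "mat_trace (A * B) = (\<Sum>i = 0..<n. \<Sum>k = 0..<m. A $$ (i, k) * B $$ (k, i))"
    unfolding mat_trace_def using A B by (auto intro!: sum.cong simp: scalar_prod_def)
  also have "\<dots> = (\<Sum>k = 0..<m. \<Sum>i = 0..<n. B $$ (k, i) * A $$ (i, k))"
    by (subst sum.swap) (simp add: mult.commute)
  also have "\<dots> = mat_trace (B * A)"
    unfolding mat_trace_def using A B by (auto intro!: sum.cong simp: scalar_prod_def)
  finally show ?thesis .
qed

lemma sum_if_unique_index:
  fixes k0 n :: nat
  assumes "k0 < n" "\<And>k. k < n \<Longrightarrow> P k \<longleftrightarrow> k = k0"
  shows "(\<Sum>k = 0..<n. if P k then f k else 0) = f k0"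
proof -
  have "(\<Sum>k = 0..<n. if P k then f k else 0) = (\<Sum>k = 0..<n. if k = k0 then f k else 0)"
    using assms(2) by (intro sum.cong) auto
  also have "\<dots> = f k0"
    using assms(1) by simp
  finally show ?thesis .
qed

lemma is_rep_carrier: "is_rep C d R \<Longrightarrow> g \<in> mor C \<Longrightarrow> R g \<in> carrier_mat (d (gcod C g)) (d (gdom C g))"
  and is_rep_idn: "is_rep C d R \<Longrightarrow> x \<in> obj C \<Longrightarrow> R (idn C x) = 1\<^sub>m (d x)"
  and is_rep_cmp:
    "is_rep C d R \<Longrightarrow> g \<in> mor C \<Longrightarrow> h \<in> mor C \<Longrightarrow> gdom C g = gcod C h \<Longrightarrow> R (cmp C g h) = R g * R h"
  unfolding is_rep_def by blast+

lemma nat_trans_carrier: "nat_trans C d R e S \<alpha> \<Longrightarrow> x \<in> obj C \<Longrightarrow> \<alpha> x \<in> carrier_mat (e x) (d x)"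
  and nat_trans_commute: "nat_trans C d R e S \<alpha> \<Longrightarrow> g \<in> mor C \<Longrightarrow> S g * \<alpha> (gdom C g) = \<alpha> (gcod C g) * R g"
  unfolding nat_trans_def by blast+

lemma nat_trans_id: "is_rep C d R \<Longrightarrow> nat_trans C d R d R (\<lambda>x. 1\<^sub>m (d x))"
  unfolding nat_trans_def by (auto dest: is_rep_carrier)

lemma (in finite_groupoid) nat_trans_comp:
  assumes R: "is_rep G d R" and S: "is_rep G e S" and T: "is_rep G k T"
    and \<alpha>: "nat_trans G d R e S \<alpha>" and \<beta>: "nat_trans G e S k T \<beta>"
  shows "nat_trans G d R k T (\<lambda>x. \<beta> x * \<alpha> x)"
  unfolding nat_trans_def
proof (intro conjI ballI)
  fix x assume x: "x \<in> obj G"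
  show "\<beta> x * \<alpha> x \<in> carrier_mat (k x) (d x)"
    using nat_trans_carrier[OF \<beta> x] nat_trans_carrier[OF \<alpha> x] by (rule mult_carrier_mat)
next
  fix g assume g: "g \<in> mor G"
  let ?x = "gdom G g" and ?y = "gcod G g"
  have carriers: "T g \<in> carrier_mat (k ?y) (k ?x)" "R g \<in> carrier_mat (d ?y) (d ?x)"
    "\<alpha> ?x \<in> carrier_mat (e ?x) (d ?x)" "\<alpha> ?y \<in> carrier_mat (e ?y) (d ?y)"
    "\<beta> ?x \<in> carrier_mat (k ?x) (e ?x)" "\<beta> ?y \<in> carrier_mat (k ?y) (e ?y)"
    using is_rep_carrier[OF T g] is_rep_carrier[OF R g] g
      nat_trans_carrier[OF \<alpha>] nat_trans_carrier[OF \<beta>] by auto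
  have "T g * (\<beta> ?x * \<alpha> ?x) = (T g * \<beta> ?x) * \<alpha> ?x"
    using carriers by (simp add: assoc_mult_mat)
  also have "\<dots> = (\<beta> ?y * S g) * \<alpha> ?x" using nat_trans_commute[OF \<beta> g] by simp
  also have "\<dots> = \<beta> ?y * (S g * \<alpha> ?x)"
    using carriers is_rep_carrier[OF S g] by (simp add: assoc_mult_mat)
  also have "\<dots> = \<beta> ?y * (\<alpha> ?y * R g)" using nat_trans_commute[OF \<alpha> g] by simp
  also have "\<dots> = (\<beta> ?y * \<alpha> ?y) * R g" using carriers by (simp add: assoc_mult_mat)
  finally show "T g * (\<beta> ?x * \<alpha> ?x) = (\<beta> ?y * \<alpha> ?y) * R g" .
qed

lemma (in finite_groupoid) trace_eq_if_nat_iso: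
  assumes R: "is_rep G d R" and S: "is_rep G e S" and \<phi>: "nat_trans G d R e S \<phi>"
    and g: "g \<in> isotropy G y"
    and \<psi>: "\<psi> \<in> carrier_mat (d y) (e y)" "\<psi> * \<phi> y = 1\<^sub>m (d y)" "\<phi> y * \<psi> = 1\<^sub>m (e y)"
  shows "mat_trace (R g) = mat_trace (S g)"
proof -
  have gy: "g \<in> mor G" "gdom G g = y" "gcod G g = y" using g by (auto simp: isotropy_iff)
  have Rg: "R g \<in> carrier_mat (d y) (d y)" and Sg: "S g \<in> carrier_mat (e y) (e y)"
    and \<phi>y: "\<phi> y \<in> carrier_mat (e y) (d y)"
    using is_rep_carrier[OF R gy(1)] is_rep_carrier[OF S gy(1)] nat_trans_carrier[OF \<phi>] gy by auto
  have "R g = (\<psi> * \<phi> y) * R g" using \<psi>(2) Rg by simp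
  also have "\<dots> = \<psi> * (\<phi> y * R g)" using \<psi>(1) \<phi>y Rg by (rule assoc_mult_mat)
  also have "\<phi> y * R g = S g * \<phi> y" using nat_trans_commute[OF \<phi> gy(1)] gy by simp
  finally have "mat_trace (R g) = mat_trace ((S g * \<phi> y) * \<psi>)"
    using mat_trace_mult_comm[OF \<psi>(1) mult_carrier_mat[OF Sg \<phi>y]] by simp
  also have "\<dots> = mat_trace (S g * (\<phi> y * \<psi>))" using Sg \<phi>y \<psi>(1) by (simp add: assoc_mult_mat)
  also have "\<dots> = mat_trace (S g)" using \<psi>(3) Sg by simp
  finally show ?thesis .
qed

lemma (in finite_groupoid) character_eq_trace:
  assumes R: "is_rep G d R" and g: "g \<in> isotropy G y"
  shows "character G d R g = mat_trace (R g)"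
proof -
  have gy: "g \<in> mor G" "gdom G g = y" "gcod G g = y" and y: "y \<in> obj G"
    using g by (auto simp: isotropy_iff)
  have "rep_basis G d = Sigma (obj G) (\<lambda>x. {0..<d x})"
    unfolding rep_basis_def by auto
  then have "character G d R g = (\<Sum>x\<in>obj G. \<Sum>i = 0..<d x. rep_hat G R g (x, i) (x, i))"
    unfolding character_def using finite_obj by (simp add: sum.Sigma)
  also have "\<dots> = (\<Sum>x\<in>obj G. if x = y then (\<Sum>i = 0..<d y. R g $$ (i, i)) else 0)"
    unfolding rep_hat_def using gy by (intro sum.cong) auto
  also have "\<dots> = mat_trace (R g)"
    unfolding mat_trace_def using y finite_obj is_rep_carrier[OF R gy(1)] gy by simp
  finally show ?thesis .
qed

section \<open>The universal property of induction\<close>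

lemma is_induction_rep: "is_induction G H d R dI I \<eta> \<Longrightarrow> is_rep G dI I"
  and is_induction_unit: "is_induction G H d R dI I \<eta> \<Longrightarrow> nat_trans H d R dI I \<eta>"
  unfolding is_induction_def by blast+

lemma is_induction_factor:
  assumes "is_induction G H d R dI I \<eta>" "is_rep G e S" "nat_trans H d R e S f"
  obtains \<phi> where "nat_trans G dI I e S \<phi>" "\<forall>x\<in>obj H. \<phi> x * \<eta> x = f x"
  using assms unfolding is_induction_def by blast

lemma is_induction_factor_unique:
  assumes "is_induction G H d R dI I \<eta>" "is_rep G e S" "nat_trans H d R e S f"
    and "nat_trans G dI I e S \<phi>" "\<forall>x\<in>obj H. \<phi> x * \<eta> x = f x"
    and "nat_trans G dI I e S \<psi>" "\<forall>x\<in>obj H. \<psi> x * \<eta> x = f x"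
    and "x \<in> obj G"
  shows "\<phi> x = \<psi> x"
  using assms unfolding is_induction_def by blast

lemma induction_endo_eq_id:
  assumes ind: "is_induction G H d R dI I \<eta>" and \<theta>: "nat_trans G dI I dI I \<theta>"
    and fixes_unit: "\<forall>x\<in>obj H. \<theta> x * \<eta> x = \<eta> x" and x: "x \<in> obj G"
  shows "\<theta> x = 1\<^sub>m (dI x)"
proof (rule is_induction_factor_unique[OF ind is_induction_rep[OF ind] is_induction_unit[OF ind] \<theta> fixes_unit])
  show "nat_trans G dI I dI I (\<lambda>x. 1\<^sub>m (dI x))" by (rule nat_trans_id[OF is_induction_rep[OF ind]])
  show "\<forall>x\<in>obj H. 1\<^sub>m (dI x) * \<eta> x = \<eta> x"
    using nat_trans_carrier[OF is_induction_unit[OF ind]] left_mult_one_mat by blast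
qed (rule x)

section \<open>Cosets and the permutation representation\<close>

definition left_coset :: "('o, 'm) gpd \<Rightarrow> ('o, 'm) gpd \<Rightarrow> 'm \<Rightarrow> 'm set" where
  "left_coset G H a = {cmp G a h | h. h \<in> mor H \<and> gcod G h = gdom G a}"

definition coset_space :: "('o, 'm) gpd \<Rightarrow> ('o, 'm) gpd \<Rightarrow> 'o \<Rightarrow> 'm set set" where
  "coset_space G H y = left_coset G H ` {a \<in> mor G. gcod G a = y}"

definition coset_rep :: "('o, 'm) gpd \<Rightarrow> ('o, 'm) gpd \<Rightarrow> 'm set \<Rightarrow> 'm" where
  "coset_rep G H C = (SOME a. a \<in> mor G \<and> C = left_coset G H a)"

definition coset_act :: "('o, 'm) gpd \<Rightarrow> 'm \<Rightarrow> 'm set \<Rightarrow> 'm set" where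
  "coset_act G g C = cmp G g ` C"

definition coset_dim :: "('o, 'm) gpd \<Rightarrow> ('o, 'm) gpd \<Rightarrow> 'o \<Rightarrow> nat" where
  "coset_dim G H y = card (coset_space G H y)"

(* The permutation representation lives on complex^(coset_dim y); this enumeration indexes
   its basis by the cosets over y. *)
definition coset_enum :: "('o, 'm) gpd \<Rightarrow> ('o, 'm) gpd \<Rightarrow> 'o \<Rightarrow> nat \<Rightarrow> 'm set" where
  "coset_enum G H y = (SOME f. bij_betw f {0..<coset_dim G H y} (coset_space G H y))"

definition coset_indicator :: "('o, 'm) gpd \<Rightarrow> ('o, 'm) gpd \<Rightarrow> 'o \<Rightarrow> 'm set \<Rightarrow> complex mat" where
  "coset_indicator G H y C = mat (coset_dim G H y) 1 (\<lambda>(i, _). if coset_enum G H y i = C then 1 else 0)"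

definition perm_rep :: "('o, 'm) gpd \<Rightarrow> ('o, 'm) gpd \<Rightarrow> 'm \<Rightarrow> complex mat" where
  "perm_rep G H g = mat (coset_dim G H (gcod G g)) (coset_dim G H (gdom G g))
     (\<lambda>(i, j). if coset_enum G H (gcod G g) i = coset_act G g (coset_enum G H (gdom G g) j) then 1 else 0)"

definition coset_unit :: "('o, 'm) gpd \<Rightarrow> ('o, 'm) gpd \<Rightarrow> 'o \<Rightarrow> complex mat" where
  "coset_unit G H x = coset_indicator G H x (left_coset G H (idn G x))"

locale wide_connected_subgroupoid = finite_groupoid G for G :: "('o, 'm) gpd" +
  fixes H :: "('o, 'm) gpd"
  assumes wide: "wide_subgroupoid G H" and connected: "connected_gpd H"
begin

lemma H_in_mor [simp]: "h \<in> mor H \<Longrightarrow> h \<in> mor G"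
  and obj_H: "obj H = obj G"
  and groupoid_H: "groupoid H"
  and H_ops: "gdom H = gdom G" "gcod H = gcod G" "cmp H = cmp G" "idn H = idn G"
  using wide unfolding wide_subgroupoid_def subgroupoid_def by auto

interpretation H: finite_groupoid H
  by (rule finite_groupoid.intro[OF groupoid_H])

lemma idn_in_H [simp]: "x \<in> obj G \<Longrightarrow> idn G x \<in> mor H"
  using H.idn_in_mor[of x] unfolding obj_H H_ops by simp

lemma cmp_in_H [simp]: "h \<in> mor H \<Longrightarrow> h' \<in> mor H \<Longrightarrow> gdom G h = gcod G h' \<Longrightarrow> cmp G h h' \<in> mor H"
  using H.cmp_in_mor[of h h'] unfolding H_ops by simp

lemma ginv_in_H [simp]:
  assumes h: "h \<in> mor H"
  shows "ginv G h \<in> mor H"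
proof -
  have "ginv H h = ginv G h"
    using ginv_cmp_cancel[of h "ginv H h"] H.ginv_right[OF h] H.cod_ginv[OF h] h H.ginv_in_mor[OF h]
    unfolding H_ops by simp
  then show ?thesis using H.ginv_in_mor[OF h] by simp
qed

lemma connected_H: "x \<in> obj G \<Longrightarrow> y \<in> obj G \<Longrightarrow> \<exists>h\<in>mor H. gdom G h = x \<and> gcod G h = y"
  using connected unfolding connected_gpd_def obj_H H_ops by blast

lemma left_coset_memI:
  "a \<in> mor G \<Longrightarrow> h \<in> mor H \<Longrightarrow> gcod G h = gdom G a \<Longrightarrow> cmp G a h \<in> left_coset G H a"
  unfolding left_coset_def by blast

lemma left_coset_memE:
  assumes "b \<in> left_coset G H a"
  obtains h where "h \<in> mor H" "gcod G h = gdom G a" "b = cmp G a h"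
  using assms unfolding left_coset_def by blast

lemma left_coset_self: "a \<in> mor G \<Longrightarrow> a \<in> left_coset G H a"
  using left_coset_memI[of a "idn G (gdom G a)"] by simp

lemma left_coset_trans:
  assumes a: "a \<in> mor G" and b: "b \<in> left_coset G H a" and c: "c \<in> left_coset G H b"
  shows "c \<in> left_coset G H a"
proof -
  obtain h where h: "h \<in> mor H" "gcod G h = gdom G a" "b = cmp G a h"
    using b by (rule left_coset_memE)
  obtain h' where h': "h' \<in> mor H" "gcod G h' = gdom G b" "c = cmp G b h'"
    using c by (rule left_coset_memE)
  have "c = cmp G a (cmp G h h')" using a h h' by (simp add: assoc)
  then show ?thesis using left_coset_memI[of a "cmp G h h'"] a h h' by simp
qed

lemma left_coset_sym:
  assumes a: "a \<in> mor G" and b: "b \<in> left_coset G H a"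
  shows "a \<in> left_coset G H b"
proof -
  obtain h where h: "h \<in> mor H" "gcod G h = gdom G a" "b = cmp G a h"
    using b by (rule left_coset_memE)
  have "a = cmp G b (ginv G h)" using a h by (simp add: assoc)
  then show ?thesis using left_coset_memI[of b "ginv G h"] a h by simp
qed

lemma left_coset_eq:
  assumes "a \<in> mor G" "b \<in> left_coset G H a"
  shows "left_coset G H b = left_coset G H a"
proof -
  have "b \<in> mor G" using assms by (auto elim: left_coset_memE)
  then show ?thesis
    using assms left_coset_trans left_coset_sym by blast
qed

lemma coset_act_left_coset:
  assumes "g \<in> mor G" "a \<in> mor G" "gdom G g = gcod G a"
  shows "coset_act G g (left_coset G H a) = left_coset G H (cmp G g a)"
  unfolding coset_act_def left_coset_def using assms by (force simp: assoc)

lemma finite_coset_space: "finite (coset_space G H y)"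
  unfolding coset_space_def using finite_mor by simp

lemma left_coset_in_coset_space: "a \<in> mor G \<Longrightarrow> left_coset G H a \<in> coset_space G H (gcod G a)"
  unfolding coset_space_def by auto

lemma coset_space_memE:
  assumes "C \<in> coset_space G H y"
  obtains a where "a \<in> mor G" "gcod G a = y" "C = left_coset G H a"
  using assms unfolding coset_space_def by auto

lemma coset_rep:
  assumes C: "C \<in> coset_space G H y"
  shows "coset_rep G H C \<in> mor G" "gcod G (coset_rep G H C) = y" "left_coset G H (coset_rep G H C) = C"
proof -
  obtain a where a: "a \<in> mor G" "gcod G a = y" "C = left_coset G H a"
    using C by (rule coset_space_memE)
  have r: "coset_rep G H C \<in> mor G \<and> C = left_coset G H (coset_rep G H C)"
    unfolding coset_rep_def by (rule someI[of _ a]) (use a in auto)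
  then show "coset_rep G H C \<in> mor G" "left_coset G H (coset_rep G H C) = C" by auto
  have "coset_rep G H C \<in> left_coset G H a" using left_coset_self r a(3) by auto
  then show "gcod G (coset_rep G H C) = y"
    using a by (auto elim: left_coset_memE)
qed

lemma coset_act_in_coset_space:
  assumes g: "g \<in> mor G" and C: "C \<in> coset_space G H (gdom G g)"
  shows "coset_act G g C \<in> coset_space G H (gcod G g)"
proof -
  obtain a where a: "a \<in> mor G" "gcod G a = gdom G g" "C = left_coset G H a"
    using C by (rule coset_space_memE)
  then have "coset_act G g C = left_coset G H (cmp G g a)"
    using g by (simp add: coset_act_left_coset)
  then show ?thesis using left_coset_in_coset_space[of "cmp G g a"] a g by simp
qed

lemma coset_act_idn:
  assumes "C \<in> coset_space G H x"
  shows "coset_act G (idn G x) C = C"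
proof -
  obtain a where a: "a \<in> mor G" "gcod G a = x" "C = left_coset G H a"
    using assms by (rule coset_space_memE)
  then have "x \<in> obj G" by auto
  then show ?thesis using a by (simp add: coset_act_left_coset)
qed

lemma coset_act_cmp:
  assumes "g \<in> mor G" "h \<in> mor G" "gdom G g = gcod G h" "C \<in> coset_space G H (gdom G h)"
  shows "coset_act G (cmp G g h) C = coset_act G g (coset_act G h C)"
  using assms(4) by (rule coset_space_memE) (use assms in \<open>simp add: coset_act_left_coset assoc\<close>)


lemma coset_enum_bij: "bij_betw (coset_enum G H y) {0..<coset_dim G H y} (coset_space G H y)"
proof -
  have "\<exists>f. bij_betw f {0..<coset_dim G H y} (coset_space G H y)"
    unfolding coset_dim_def by (rule ex_bij_betw_nat_finite[OF finite_coset_space])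
  then show ?thesis unfolding coset_enum_def by (rule someI_ex)
qed

lemma coset_enum_in: "i < coset_dim G H y \<Longrightarrow> coset_enum G H y i \<in> coset_space G H y"
  using bij_betwE[OF coset_enum_bij] by simp

lemma coset_enum_eq_iff:
  "i < coset_dim G H y \<Longrightarrow> j < coset_dim G H y \<Longrightarrow> coset_enum G H y i = coset_enum G H y j \<longleftrightarrow> i = j"
  using bij_betw_imp_inj_on[OF coset_enum_bij] unfolding inj_on_def by auto

lemma coset_enum_surj:
  assumes "C \<in> coset_space G H y"
  obtains j where "j < coset_dim G H y" "coset_enum G H y j = C"
  using assms bij_betw_imp_surj_on[OF coset_enum_bij] by (metis atLeastLessThan_iff imageE)

lemma coset_indicator_carrier: "coset_indicator G H y C \<in> carrier_mat (coset_dim G H y) 1"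
  unfolding coset_indicator_def by simp

lemma perm_rep_carrier: "perm_rep G H g \<in> carrier_mat (coset_dim G H (gcod G g)) (coset_dim G H (gdom G g))"
  unfolding perm_rep_def by simp

lemma mult_coset_indicator_enum:
  assumes A: "A \<in> carrier_mat n (coset_dim G H y)" and i: "i < n" and j: "j < coset_dim G H y"
  shows "(A * coset_indicator G H y (coset_enum G H y j)) $$ (i, 0) = A $$ (i, j)"
proof -
  have "(A * coset_indicator G H y (coset_enum G H y j)) $$ (i, 0)
      = (\<Sum>k = 0..<coset_dim G H y. if coset_enum G H y k = coset_enum G H y j then A $$ (i, k) else 0)"
    using index_mult_mat_sum[OF A coset_indicator_carrier i] unfolding coset_indicator_def
    by (auto intro: sum.cong)
  also have "\<dots> = A $$ (i, j)" using j coset_enum_eq_iff by (intro sum_if_unique_index) auto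
  finally show ?thesis .
qed

lemma mat_eq_by_coset_indicators:
  assumes A: "A \<in> carrier_mat n (coset_dim G H y)" and B: "B \<in> carrier_mat n (coset_dim G H y)"
    and eq: "\<And>C. C \<in> coset_space G H y \<Longrightarrow> A * coset_indicator G H y C = B * coset_indicator G H y C"
  shows "A = B"
proof (rule eq_matI)
  fix i j assume "i < dim_row B" "j < dim_col B"
  then have i: "i < n" and j: "j < coset_dim G H y" using B by auto
  show "A $$ (i, j) = B $$ (i, j)"
    using mult_coset_indicator_enum[OF A i j] mult_coset_indicator_enum[OF B i j]
      eq[OF coset_enum_in[OF j]] by simp
qed (use A B in auto)

lemma perm_rep_mult_indicator:
  assumes g: "g \<in> mor G" and C: "C \<in> coset_space G H (gdom G g)"
  shows "perm_rep G H g * coset_indicator G H (gdom G g) C = coset_indicator G H (gcod G g) (coset_act G g C)"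
proof (rule eq_matI)
  obtain j where j: "j < coset_dim G H (gdom G g)" "coset_enum G H (gdom G g) j = C"
    using C by (rule coset_enum_surj)
  fix i k assume "i < dim_row (coset_indicator G H (gcod G g) (coset_act G g C))"
    "k < dim_col (coset_indicator G H (gcod G g) (coset_act G g C))"
  then have i: "i < coset_dim G H (gcod G g)" and k: "k = 0" unfolding coset_indicator_def by auto
  show "(perm_rep G H g * coset_indicator G H (gdom G g) C) $$ (i, k)
      = coset_indicator G H (gcod G g) (coset_act G g C) $$ (i, k)"
    using mult_coset_indicator_enum[OF perm_rep_carrier i j(1)] i j k
    unfolding perm_rep_def coset_indicator_def by simp
qed (simp_all add: perm_rep_def coset_indicator_def)

lemma perm_rep_idn:
  assumes x: "x \<in> obj G"
  shows "perm_rep G H (idn G x) = 1\<^sub>m (coset_dim G H x)"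
  by (rule mat_eq_by_coset_indicators[of _ _ x])
    (use x perm_rep_carrier[of "idn G x"] perm_rep_mult_indicator[of "idn G x"] coset_act_idn
      left_mult_one_mat[OF coset_indicator_carrier] in auto)

lemma perm_rep_cmp:
  assumes g: "g \<in> mor G" and h: "h \<in> mor G" and gh: "gdom G g = gcod G h"
  shows "perm_rep G H (cmp G g h) = perm_rep G H g * perm_rep G H h"
proof (rule mat_eq_by_coset_indicators[of _ _ "gdom G h"])
  show "perm_rep G H (cmp G g h) \<in> carrier_mat (coset_dim G H (gcod G g)) (coset_dim G H (gdom G h))"
    using perm_rep_carrier[of "cmp G g h"] g h gh by simp
  show "perm_rep G H g * perm_rep G H h \<in> carrier_mat (coset_dim G H (gcod G g)) (coset_dim G H (gdom G h))"
    using perm_rep_carrier[of g] perm_rep_carrier[of h] gh by auto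
  fix C assume C: "C \<in> coset_space G H (gdom G h)"
  have hC: "coset_act G h C \<in> coset_space G H (gdom G g)"
    using coset_act_in_coset_space[OF h C] gh by simp
  have "perm_rep G H g * perm_rep G H h * coset_indicator G H (gdom G h) C
      = perm_rep G H g * (perm_rep G H h * coset_indicator G H (gdom G h) C)"
    using perm_rep_carrier[of g] perm_rep_carrier[of h] coset_indicator_carrier gh
    by (auto intro: assoc_mult_mat)
  also have "\<dots> = coset_indicator G H (gcod G g) (coset_act G g (coset_act G h C))"
    using perm_rep_mult_indicator[OF h C] perm_rep_mult_indicator[OF g hC] gh by simp
  also have "\<dots> = perm_rep G H (cmp G g h) * coset_indicator G H (gdom G h) C"
    using perm_rep_mult_indicator[of "cmp G g h" C] coset_act_cmp[OF g h gh C] g h gh C by simp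
  finally show "perm_rep G H (cmp G g h) * coset_indicator G H (gdom G h) C
      = perm_rep G H g * perm_rep G H h * coset_indicator G H (gdom G h) C" by simp
qed

lemma is_rep_perm_rep: "is_rep G (coset_dim G H) (perm_rep G H)"
  unfolding is_rep_def using perm_rep_carrier perm_rep_idn perm_rep_cmp by blast

lemma perm_rep_mult_unit:
  assumes a: "a \<in> mor G"
  shows "perm_rep G H a * coset_unit G H (gdom G a) = coset_indicator G H (gcod G a) (left_coset G H a)"
proof -
  have "left_coset G H (idn G (gdom G a)) \<in> coset_space G H (gdom G a)"
    using left_coset_in_coset_space[of "idn G (gdom G a)"] a by simp
  then show ?thesis
    using perm_rep_mult_indicator[OF a] a unfolding coset_unit_def by (simp add: coset_act_left_coset)
qed

lemma nat_trans_coset_unit: "nat_trans H triv_dim triv_rep (coset_dim G H) (perm_rep G H) (coset_unit G H)"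
  unfolding nat_trans_def
proof (intro conjI ballI)
  fix x assume "x \<in> obj H"
  show "coset_unit G H x \<in> carrier_mat (coset_dim G H x) (triv_dim x)"
    unfolding coset_unit_def triv_dim_def by (rule coset_indicator_carrier)
next
  fix h assume h: "h \<in> mor H"
  have "h \<in> left_coset G H (idn G (gcod G h))"
    using left_coset_memI[of "idn G (gcod G h)" h] h by simp
  then have "left_coset G H h = left_coset G H (idn G (gcod G h))"
    using left_coset_eq[of "idn G (gcod G h)" h] h by simp
  then show "perm_rep G H h * coset_unit G H (gdom H h) = coset_unit G H (gcod H h) * triv_rep h"
    using perm_rep_mult_unit[of h] h right_mult_one_mat[OF coset_indicator_carrier]
    unfolding H_ops coset_unit_def triv_rep_def by simp
qed

lemma trace_perm_rep:
  assumes g: "g \<in> isotropy G y"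
  shows "mat_trace (perm_rep G H g) = of_nat (card {C \<in> coset_space G H y. coset_act G g C = C})"
proof -
  have gy: "gdom G g = y" "gcod G g = y" using g by (auto simp: isotropy_iff)
  have "mat_trace (perm_rep G H g)
      = (\<Sum>i = 0..<coset_dim G H y. if coset_act G g (coset_enum G H y i) = coset_enum G H y i then 1 else 0)"
    unfolding mat_trace_def perm_rep_def gy by (auto intro: sum.cong)
  also have "\<dots> = (\<Sum>C\<in>coset_space G H y. if coset_act G g C = C then 1 else 0)"
    by (rule sum.reindex_bij_betw[OF coset_enum_bij])
  also have "\<dots> = of_nat (card {C \<in> coset_space G H y. coset_act G g C = C})"
    using finite_coset_space by (simp add: sum.If_cases Int_def conj_commute)
  finally show ?thesis .
qed

end

section \<open>Characters of representations induced from the trivial one\<close>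

locale trivial_induction = wide_connected_subgroupoid G H for G H :: "('o, 'm) gpd" +
  fixes dI :: "'o \<Rightarrow> nat" and I :: "'m \<Rightarrow> complex mat" and \<eta> :: "'o \<Rightarrow> complex mat"
  assumes induction: "is_induction G H triv_dim triv_rep dI I \<eta>"
begin

lemma is_rep_I: "is_rep G dI I"
  using is_induction_rep[OF induction] .

lemma I_carrier: "a \<in> mor G \<Longrightarrow> I a \<in> carrier_mat (dI (gcod G a)) (dI (gdom G a))"
  using is_rep_carrier[OF is_rep_I] .

lemma unit_carrier: "x \<in> obj G \<Longrightarrow> \<eta> x \<in> carrier_mat (dI x) 1"
  using nat_trans_carrier[OF is_induction_unit[OF induction]] obj_H by (simp add: triv_dim_def)

lemma unit_invariant:
  assumes h: "h \<in> mor H"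
  shows "I h * \<eta> (gdom G h) = \<eta> (gcod G h)"
proof -
  have "I h * \<eta> (gdom G h) = \<eta> (gcod G h) * 1\<^sub>m 1"
    using nat_trans_commute[OF is_induction_unit[OF induction] h] unfolding H_ops triv_rep_def .
  then show ?thesis using unit_carrier[of "gcod G h"] h by simp
qed

definition transported_unit :: "'m \<Rightarrow> complex mat" where
  "transported_unit a = I a * \<eta> (gdom G a)"

lemma transported_unit_carrier: "a \<in> mor G \<Longrightarrow> transported_unit a \<in> carrier_mat (dI (gcod G a)) 1"
  unfolding transported_unit_def using I_carrier unit_carrier by (meson dom_in_obj mult_carrier_mat)

lemma transported_unit_cmp:
  assumes g: "g \<in> mor G" and a: "a \<in> mor G" and ga: "gdom G g = gcod G a"
  shows "transported_unit (cmp G g a) = I g * transported_unit a"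
  unfolding transported_unit_def
  using is_rep_cmp[OF is_rep_I g a ga] I_carrier[OF g] I_carrier[OF a] unit_carrier[of "gdom G a"] g a ga
  by (simp add: assoc_mult_mat)

lemma transported_unit_idn: "x \<in> obj G \<Longrightarrow> transported_unit (idn G x) = \<eta> x"
  unfolding transported_unit_def using is_rep_idn[OF is_rep_I] left_mult_one_mat[OF unit_carrier] by simp

lemma transported_unit_left_coset:
  assumes a: "a \<in> mor G" and b: "b \<in> left_coset G H a"
  shows "transported_unit b = transported_unit a"
proof -
  obtain h where h: "h \<in> mor H" "gcod G h = gdom G a" "b = cmp G a h"
    using b by (rule left_coset_memE)
  have "transported_unit b = I a * transported_unit h"
    using transported_unit_cmp[of a h] a h by simp
  also have "transported_unit h = \<eta> (gdom G a)"
    using unit_invariant[OF h(1)] h unfolding transported_unit_def by simp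
  finally show ?thesis unfolding transported_unit_def .
qed

lemma transported_unit_coset_rep:
  assumes C: "C \<in> coset_space G H y" and a: "a \<in> mor G" "C = left_coset G H a"
  shows "transported_unit (coset_rep G H C) = transported_unit a"
  using transported_unit_left_coset[OF a(1)] left_coset_self[OF coset_rep(1)[OF C]] coset_rep(3)[OF C] a(2)
  by simp

(* The inverse of the comparison map to perm_rep provided by the universal property. *)
definition coset_lift :: "'o \<Rightarrow> complex mat" where
  "coset_lift z = mat (dI z) (coset_dim G H z)
     (\<lambda>(i, j). transported_unit (coset_rep G H (coset_enum G H z j)) $$ (i, 0))"

lemma coset_lift_carrier: "coset_lift z \<in> carrier_mat (dI z) (coset_dim G H z)"
  unfolding coset_lift_def by simp

lemma coset_lift_mult_indicator:
  assumes C: "C \<in> coset_space G H z"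
  shows "coset_lift z * coset_indicator G H z C = transported_unit (coset_rep G H C)"
proof -
  have v: "transported_unit (coset_rep G H C) \<in> carrier_mat (dI z) 1"
    using transported_unit_carrier[OF coset_rep(1)[OF C]] coset_rep(2)[OF C] by simp
  obtain j where j: "j < coset_dim G H z" "coset_enum G H z j = C"
    using C by (rule coset_enum_surj)
  show ?thesis
  proof (rule eq_matI)
    fix i k assume "i < dim_row (transported_unit (coset_rep G H C))"
      "k < dim_col (transported_unit (coset_rep G H C))"
    then have i: "i < dI z" and k: "k = 0" using v by auto
    show "(coset_lift z * coset_indicator G H z C) $$ (i, k) = transported_unit (coset_rep G H C) $$ (i, k)"
      using mult_coset_indicator_enum[OF coset_lift_carrier i j(1)] i j k unfolding coset_lift_def by simp
  qed (use v coset_lift_carrier coset_indicator_carrier in auto)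
qed

lemma nat_trans_coset_lift: "nat_trans G (coset_dim G H) (perm_rep G H) dI I coset_lift"
  unfolding nat_trans_def
proof (intro conjI ballI)
  fix a assume a: "a \<in> mor G"
  let ?x = "gdom G a" and ?z = "gcod G a"
  show "I a * coset_lift ?x = coset_lift ?z * perm_rep G H a"
  proof (rule mat_eq_by_coset_indicators[of _ _ ?x])
    show "I a * coset_lift ?x \<in> carrier_mat (dI ?z) (coset_dim G H ?x)"
      using I_carrier[OF a] coset_lift_carrier by (rule mult_carrier_mat)
    show "coset_lift ?z * perm_rep G H a \<in> carrier_mat (dI ?z) (coset_dim G H ?x)"
      using coset_lift_carrier perm_rep_carrier by (rule mult_carrier_mat)
    fix C assume C: "C \<in> coset_space G H ?x"
    define b where "b = coset_rep G H C"
    have b: "b \<in> mor G" "gcod G b = ?x" "left_coset G H b = C"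
      using coset_rep[OF C] unfolding b_def by auto
    have aC: "coset_act G a C \<in> coset_space G H ?z" "coset_act G a C = left_coset G H (cmp G a b)"
      using coset_act_in_coset_space[OF a C] coset_act_left_coset[OF a b(1)] b by auto
    have "I a * coset_lift ?x * coset_indicator G H ?x C = I a * (coset_lift ?x * coset_indicator G H ?x C)"
      using I_carrier[OF a] coset_lift_carrier coset_indicator_carrier by (rule assoc_mult_mat)
    also have "\<dots> = I a * transported_unit b"
      using coset_lift_mult_indicator[OF C] unfolding b_def by simp
    also have "\<dots> = transported_unit (cmp G a b)"
      using transported_unit_cmp[OF a b(1)] b by simp
    also have "\<dots> = transported_unit (coset_rep G H (coset_act G a C))"
      using transported_unit_coset_rep[OF aC(1) _ aC(2)] a b by simp
    also have "\<dots> = coset_lift ?z * (perm_rep G H a * coset_indicator G H ?x C)"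
      using coset_lift_mult_indicator[OF aC(1)] perm_rep_mult_indicator[OF a C] by simp
    also have "\<dots> = coset_lift ?z * perm_rep G H a * coset_indicator G H ?x C"
      using coset_lift_carrier perm_rep_carrier coset_indicator_carrier by (rule assoc_mult_mat[symmetric])
    finally show "I a * coset_lift ?x * coset_indicator G H ?x C
        = coset_lift ?z * perm_rep G H a * coset_indicator G H ?x C" .
  qed
qed (rule coset_lift_carrier)

lemma coset_lift_mult_unit:
  assumes z: "z \<in> obj G"
  shows "coset_lift z * coset_unit G H z = \<eta> z"
proof -
  have "left_coset G H (idn G z) \<in> coset_space G H z"
    using left_coset_in_coset_space[of "idn G z"] z by simp
  then show ?thesis
    unfolding coset_unit_def using coset_lift_mult_indicator transported_unit_coset_rep
      transported_unit_idn z by simp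
qed

context
  fixes \<phi> :: "'o \<Rightarrow> complex mat"
  assumes \<phi>: "nat_trans G dI I (coset_dim G H) (perm_rep G H) \<phi>"
    and \<phi>_unit: "\<And>x. x \<in> obj G \<Longrightarrow> \<phi> x * \<eta> x = coset_unit G H x"
begin

lemma comparison_mult_coset_lift:
  assumes z: "z \<in> obj G"
  shows "\<phi> z * coset_lift z = 1\<^sub>m (coset_dim G H z)"
proof (rule mat_eq_by_coset_indicators[of _ _ z])
  have \<phi>_carrier: "\<And>x. x \<in> obj G \<Longrightarrow> \<phi> x \<in> carrier_mat (coset_dim G H x) (dI x)"
    using nat_trans_carrier[OF \<phi>] .
  show "\<phi> z * coset_lift z \<in> carrier_mat (coset_dim G H z) (coset_dim G H z)"
    using \<phi>_carrier[OF z] coset_lift_carrier by (rule mult_carrier_mat)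
  show "1\<^sub>m (coset_dim G H z) \<in> carrier_mat (coset_dim G H z) (coset_dim G H z)" by simp
  fix C assume C: "C \<in> coset_space G H z"
  define b where "b = coset_rep G H C"
  have b: "b \<in> mor G" "gcod G b = z" "left_coset G H b = C"
    using coset_rep[OF C] unfolding b_def by auto
  let ?x = "gdom G b"
  have x: "?x \<in> obj G" using b by simp
  have "\<phi> z * coset_lift z * coset_indicator G H z C = \<phi> z * (coset_lift z * coset_indicator G H z C)"
    using \<phi>_carrier[OF z] coset_lift_carrier coset_indicator_carrier by (rule assoc_mult_mat)
  also have "\<dots> = \<phi> z * (I b * \<eta> ?x)"
    using coset_lift_mult_indicator[OF C] unfolding b_def transported_unit_def by simp
  also have "\<dots> = (\<phi> z * I b) * \<eta> ?x"
    using \<phi>_carrier[OF z] I_carrier[OF b(1)] unit_carrier[OF x] b by (simp add: assoc_mult_mat)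
  also have "\<phi> z * I b = perm_rep G H b * \<phi> ?x"
    using nat_trans_commute[OF \<phi> b(1)] b by simp
  also have "perm_rep G H b * \<phi> ?x * \<eta> ?x = perm_rep G H b * (\<phi> ?x * \<eta> ?x)"
    using perm_rep_carrier \<phi>_carrier[OF x] unit_carrier[OF x] by (rule assoc_mult_mat)
  also have "\<dots> = coset_indicator G H z C"
    using \<phi>_unit[OF x] perm_rep_mult_unit[OF b(1)] b by simp
  finally show "\<phi> z * coset_lift z * coset_indicator G H z C
      = 1\<^sub>m (coset_dim G H z) * coset_indicator G H z C"
    using left_mult_one_mat[OF coset_indicator_carrier] by simp
qed

lemma coset_lift_mult_comparison:
  assumes z: "z \<in> obj G"
  shows "coset_lift z * \<phi> z = 1\<^sub>m (dI z)"
proof -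
  have "nat_trans G dI I dI I (\<lambda>x. coset_lift x * \<phi> x)"
    by (rule nat_trans_comp[OF is_rep_I is_rep_perm_rep is_rep_I \<phi> nat_trans_coset_lift])
  moreover have "\<forall>x\<in>obj H. coset_lift x * \<phi> x * \<eta> x = \<eta> x"
  proof
    fix x assume "x \<in> obj H"
    then have x: "x \<in> obj G" unfolding obj_H .
    have "coset_lift x * \<phi> x * \<eta> x = coset_lift x * (\<phi> x * \<eta> x)"
      using coset_lift_carrier nat_trans_carrier[OF \<phi> x] unit_carrier[OF x] by (rule assoc_mult_mat)
    then show "coset_lift x * \<phi> x * \<eta> x = \<eta> x"
      using \<phi>_unit[OF x] coset_lift_mult_unit[OF x] by simp
  qed
  ultimately show ?thesis using induction_endo_eq_id[OF induction _ _ z] by blast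
qed

end

theorem character_eq_card_fixed_cosets:
  assumes g: "g \<in> isotropy G y"
  shows "character G dI I g = of_nat (card {C \<in> coset_space G H y. coset_act G g C = C})"
proof -
  obtain \<phi> where \<phi>: "nat_trans G dI I (coset_dim G H) (perm_rep G H) \<phi>"
    and \<phi>_unit_H: "\<forall>x\<in>obj H. \<phi> x * \<eta> x = coset_unit G H x"
    by (rule is_induction_factor[OF induction is_rep_perm_rep nat_trans_coset_unit])
  have \<phi>_unit: "\<And>x. x \<in> obj G \<Longrightarrow> \<phi> x * \<eta> x = coset_unit G H x"
    using \<phi>_unit_H unfolding obj_H by blast
  have y: "y \<in> obj G" using g by (auto simp: isotropy_iff)
  have "character G dI I g = mat_trace (I g)"
    by (rule character_eq_trace[OF is_rep_I g])
  also have "\<dots> = mat_trace (perm_rep G H g)"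
    by (rule trace_eq_if_nat_iso[OF is_rep_I is_rep_perm_rep \<phi> g coset_lift_carrier
          coset_lift_mult_comparison[OF \<phi> \<phi>_unit y] comparison_mult_coset_lift[OF \<phi> \<phi>_unit y]])
  also have "\<dots> = of_nat (card {C \<in> coset_space G H y. coset_act G g C = C})"
    by (rule trace_perm_rep[OF g])
  finally show ?thesis .
qed

end

section \<open>Double cosets and Burnside's lemma\<close>

lemma group_actionI:
  assumes \<Gamma>: "group \<Gamma>"
    and closed: "\<And>g x. g \<in> carrier \<Gamma> \<Longrightarrow> x \<in> E \<Longrightarrow> f g x \<in> E"
    and one: "\<And>x. x \<in> E \<Longrightarrow> f \<one>\<^bsub>\<Gamma>\<^esub> x = x"
    and mult: "\<And>g h x. g \<in> carrier \<Gamma> \<Longrightarrow> h \<in> carrier \<Gamma> \<Longrightarrow> x \<in> E \<Longrightarrow>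
      f (g \<otimes>\<^bsub>\<Gamma>\<^esub> h) x = f g (f h x)"
  shows "group_action \<Gamma> E (\<lambda>g. restrict (f g) E)"
proof -
  have Bij: "restrict (f g) E \<in> Bij E" if g: "g \<in> carrier \<Gamma>" for g
  proof -
    have g': "inv\<^bsub>\<Gamma>\<^esub> g \<in> carrier \<Gamma>" using group.inv_closed[OF \<Gamma> g] .
    have "f (inv\<^bsub>\<Gamma>\<^esub> g) (f g x) = x" "f g (f (inv\<^bsub>\<Gamma>\<^esub> g) x) = x" if x: "x \<in> E" for x
      using mult[OF g' g x] mult[OF g g' x] one[OF x] group.l_inv[OF \<Gamma> g] group.r_inv[OF \<Gamma> g] by simp_all
    then have "bij_betw (f g) E E"
      using closed g g' by (intro bij_betw_byWitness[where f' = "f (inv\<^bsub>\<Gamma>\<^esub> g)"]) auto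
    then show ?thesis unfolding Bij_def by simp
  qed
  have comp: "restrict (f (g \<otimes>\<^bsub>\<Gamma>\<^esub> h)) E = compose E (restrict (f g) E) (restrict (f h) E)"
    if "g \<in> carrier \<Gamma>" "h \<in> carrier \<Gamma>" for g h
    unfolding compose_def by (intro restrict_ext) (simp add: mult closed that)
  have "(\<lambda>g. restrict (f g) E) \<in> hom \<Gamma> (BijGroup E)"
    unfolding hom_def BijGroup_def using Bij comp by auto
  then show ?thesis
    unfolding group_action_def group_hom_def group_hom_axioms_def using \<Gamma> group_BijGroup by simp
qed

definition isotropy_group :: "('o, 'm) gpd \<Rightarrow> 'o \<Rightarrow> 'm monoid" where
  "isotropy_group G y = \<lparr>carrier = isotropy G y, mult = cmp G, one = idn G y\<rparr>"

lemma (in finite_groupoid) group_isotropy_group: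
  assumes y: "y \<in> obj G"
  shows "group (isotropy_group G y)"
proof (rule groupI)
  fix g assume "g \<in> carrier (isotropy_group G y)"
  then have g: "g \<in> mor G" "gdom G g = y" "gcod G g = y"
    by (auto simp: isotropy_group_def isotropy_iff)
  show "\<exists>g'\<in>carrier (isotropy_group G y). g' \<otimes>\<^bsub>isotropy_group G y\<^esub> g = \<one>\<^bsub>isotropy_group G y\<^esub>"
    using g by (intro bexI[of _ "ginv G g"]) (auto simp: isotropy_group_def isotropy_iff)
qed (use y in \<open>auto simp: isotropy_group_def isotropy_iff assoc\<close>)

definition pair_double_coset :: "('o, 'm) gpd \<Rightarrow> ('o, 'm) gpd \<Rightarrow> ('o, 'm) gpd \<Rightarrow> 'm set \<times> 'm set \<Rightarrow> 'm set" where
  "pair_double_coset G H K p =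
     double_coset G H (cmp G (ginv G (coset_rep G H (fst p))) (coset_rep G K (snd p))) K"

locale two_wide_connected_subgroupoids =
  finite_groupoid G + H: wide_connected_subgroupoid G H + K: wide_connected_subgroupoid G K
  for G H K :: "('o, 'm) gpd"
begin

lemma double_coset_memI:
  "m \<in> mor G \<Longrightarrow> h \<in> mor H \<Longrightarrow> k \<in> mor K \<Longrightarrow> gdom G h = gcod G m \<Longrightarrow> gcod G k = gdom G m
   \<Longrightarrow> cmp G (cmp G h m) k \<in> double_coset G H m K"
  unfolding double_coset_def by blast

lemma double_coset_memE:
  assumes "t \<in> double_coset G H m K"
  obtains h k where "h \<in> mor H" "k \<in> mor K" "gdom G h = gcod G m" "gcod G k = gdom G m"
    "t = cmp G (cmp G h m) k"
  using assms unfolding double_coset_def by blast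

lemma double_coset_self: "m \<in> mor G \<Longrightarrow> m \<in> double_coset G H m K"
  using double_coset_memI[of m "idn G (gcod G m)" "idn G (gdom G m)"] by simp

lemma double_coset_trans:
  assumes m: "m \<in> mor G" and m': "m' \<in> double_coset G H m K" and t: "t \<in> double_coset G H m' K"
  shows "t \<in> double_coset G H m K"
proof -
  obtain h k where hk: "h \<in> mor H" "k \<in> mor K" "gdom G h = gcod G m" "gcod G k = gdom G m"
    "m' = cmp G (cmp G h m) k"
    using m' by (rule double_coset_memE)
  obtain h' k' where hk': "h' \<in> mor H" "k' \<in> mor K" "gdom G h' = gcod G m'" "gcod G k' = gdom G m'"
    "t = cmp G (cmp G h' m') k'"
    using t by (rule double_coset_memE)
  have "t = cmp G (cmp G (cmp G h' h) m) (cmp G k k')"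
    using m hk hk' by (simp add: assoc)
  then show ?thesis
    using double_coset_memI[of m "cmp G h' h" "cmp G k k'"] m hk hk' by simp
qed

lemma double_coset_sym:
  assumes m: "m \<in> mor G" and m': "m' \<in> double_coset G H m K"
  shows "m \<in> double_coset G H m' K"
proof -
  obtain h k where hk: "h \<in> mor H" "k \<in> mor K" "gdom G h = gcod G m" "gcod G k = gdom G m"
    "m' = cmp G (cmp G h m) k"
    using m' by (rule double_coset_memE)
  have "m = cmp G (cmp G (ginv G h) m') (ginv G k)"
    using m hk by (simp add: assoc)
  then show ?thesis
    using double_coset_memI[of m' "ginv G h" "ginv G k"] m hk by simp
qed

lemma double_coset_eq:
  assumes "m \<in> mor G" "m' \<in> double_coset G H m K"
  shows "double_coset G H m' K = double_coset G H m K"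
proof -
  have "m' \<in> mor G" using assms by (auto elim: double_coset_memE)
  then show ?thesis using assms double_coset_trans double_coset_sym by blast
qed

lemma double_coset_ginv_cmp_cong:
  assumes a: "a \<in> mor G" and b: "b \<in> mor G" and ab: "gcod G a = gcod G b"
    and a': "a' \<in> left_coset G H a" and b': "b' \<in> left_coset G K b"
  shows "double_coset G H (cmp G (ginv G a') b') K = double_coset G H (cmp G (ginv G a) b) K"
proof -
  obtain h where h: "h \<in> mor H" "gcod G h = gdom G a" "a' = cmp G a h"
    using a' by (rule H.left_coset_memE)
  obtain k where k: "k \<in> mor K" "gcod G k = gdom G b" "b' = cmp G b k"
    using b' by (rule K.left_coset_memE)
  have hG: "h \<in> mor G" and kG: "k \<in> mor G" using h k by auto
  have "cmp G (ginv G a') b' = cmp G (cmp G (ginv G h) (ginv G a)) (cmp G b k)"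
    using ginv_cmp[OF a hG] h k by simp
  also have "\<dots> = cmp G (ginv G h) (cmp G (cmp G (ginv G a) b) k)"
    using a b ab hG h kG k by (simp add: assoc)
  also have "\<dots> = cmp G (cmp G (ginv G h) (cmp G (ginv G a) b)) k"
    using a b ab hG h kG k by (simp add: assoc)
  finally have "cmp G (ginv G a') b' = cmp G (cmp G (ginv G h) (cmp G (ginv G a) b)) k" .
  then have "cmp G (ginv G a') b' \<in> double_coset G H (cmp G (ginv G a) b) K"
    using double_coset_memI[of "cmp G (ginv G a) b" "ginv G h" k] a b ab h k by simp
  then show ?thesis using a b ab by (intro double_coset_eq) simp_all
qed


abbreviation coset_pairs :: "'o \<Rightarrow> ('m set \<times> 'm set) set" where
  "coset_pairs y \<equiv> coset_space G H y \<times> coset_space G K y"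

lemma pair_double_coset_left_coset:
  assumes a: "a \<in> mor G" and b: "b \<in> mor G" and ab: "gcod G a = gcod G b"
  shows "pair_double_coset G H K (left_coset G H a, left_coset G K b) = double_coset G H (cmp G (ginv G a) b) K"
proof -
  let ?C = "left_coset G H a" and ?D = "left_coset G K b"
  have C: "?C \<in> coset_space G H (gcod G a)" and D: "?D \<in> coset_space G K (gcod G a)"
    using H.left_coset_in_coset_space[OF a] K.left_coset_in_coset_space[OF b] ab by auto
  have "coset_rep G H ?C \<in> ?C" "coset_rep G K ?D \<in> ?D"
    using H.left_coset_self[OF H.coset_rep(1)[OF C]] H.coset_rep(3)[OF C]
      K.left_coset_self[OF K.coset_rep(1)[OF D]] K.coset_rep(3)[OF D] by simp_all
  then show ?thesis
    unfolding pair_double_coset_def using double_coset_ginv_cmp_cong[OF a b ab] by simp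
qed

lemma coset_pairsE:
  assumes "p \<in> coset_pairs y"
  obtains a b where "a \<in> mor G" "gcod G a = y" "b \<in> mor G" "gcod G b = y"
    "p = (left_coset G H a, left_coset G K b)"
  using assms by (auto elim!: H.coset_space_memE K.coset_space_memE)

lemma pair_double_coset_in_double_cosets:
  assumes "p \<in> coset_pairs y"
  shows "pair_double_coset G H K p \<in> double_cosets G H K"
  using assms
  by (rule coset_pairsE) (auto simp: pair_double_coset_left_coset double_cosets_def)

lemma pair_double_coset_surj:
  assumes y: "y \<in> obj G" and D: "D \<in> double_cosets G H K"
  obtains p where "p \<in> coset_pairs y" "pair_double_coset G H K p = D"
proof -
  obtain m where m: "m \<in> mor G" "D = double_coset G H m K"
    using D unfolding double_cosets_def by auto
  obtain a where a: "a \<in> mor H" "gdom G a = gcod G m" "gcod G a = y"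
    using H.connected_H[of "gcod G m" y] m y by auto
  have aG: "a \<in> mor G" using a by simp
  let ?p = "(left_coset G H a, left_coset G K (cmp G a m))"
  have "?p \<in> coset_pairs y"
    using H.left_coset_in_coset_space[OF aG] K.left_coset_in_coset_space[of "cmp G a m"] a aG m by auto
  moreover have "pair_double_coset G H K ?p = D"
    using pair_double_coset_left_coset[of a "cmp G a m"] a aG m by simp
  ultimately show ?thesis by (rule that)
qed

lemma pair_double_coset_act:
  assumes g: "g \<in> isotropy G y" and p: "p \<in> coset_pairs y"
  shows "pair_double_coset G H K (map_prod (coset_act G g) (coset_act G g) p) = pair_double_coset G H K p"
proof -
  have g': "g \<in> mor G" "gdom G g = y" "gcod G g = y" using g by (auto simp: isotropy_iff)
  obtain a b where ab: "a \<in> mor G" "gcod G a = y" "b \<in> mor G" "gcod G b = y"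
    "p = (left_coset G H a, left_coset G K b)"
    using p by (rule coset_pairsE)
  have "cmp G (ginv G (cmp G g a)) (cmp G g b) = cmp G (ginv G a) b"
    using ginv_cmp[of g a] g' ab by (simp add: assoc)
  then show ?thesis
    using pair_double_coset_left_coset[of a b] pair_double_coset_left_coset[of "cmp G g a" "cmp G g b"]
      H.coset_act_left_coset[of g a] K.coset_act_left_coset[of g b] g' ab by simp
qed

lemma same_orbit_if_pair_double_coset_eq:
  assumes p: "p \<in> coset_pairs y" and q: "q \<in> coset_pairs y"
    and eq: "pair_double_coset G H K p = pair_double_coset G H K q"
  shows "\<exists>g\<in>isotropy G y. map_prod (coset_act G g) (coset_act G g) p = q"
proof -
  obtain a b where ab: "a \<in> mor G" "gcod G a = y" "b \<in> mor G" "gcod G b = y"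
    "p = (left_coset G H a, left_coset G K b)"
    using p by (rule coset_pairsE)
  obtain a' b' where ab': "a' \<in> mor G" "gcod G a' = y" "b' \<in> mor G" "gcod G b' = y"
    "q = (left_coset G H a', left_coset G K b')"
    using q by (rule coset_pairsE)
  have "cmp G (ginv G a') b' \<in> double_coset G H (cmp G (ginv G a) b) K"
    using eq double_coset_self[of "cmp G (ginv G a') b'"] ab ab'
      pair_double_coset_left_coset[of a b] pair_double_coset_left_coset[of a' b'] by simp
  then obtain h k where h: "h \<in> mor H" "gdom G h = gdom G a"
    and k: "k \<in> mor K" "gcod G k = gdom G b"
    and hk: "cmp G (ginv G a') b' = cmp G (cmp G h (cmp G (ginv G a) b)) k"
    using ab by (auto elim!: double_coset_memE)
  have hG: "h \<in> mor G" and kG: "k \<in> mor G" using h k by auto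
  have ch: "gcod G h = gdom G a'" and dk: "gdom G k = gdom G b'"
    using arg_cong[OF hk, of "gcod G"] arg_cong[OF hk, of "gdom G"] h hG k kG ab ab' by simp_all
  define g where "g = cmp G (cmp G a' h) (ginv G a)"
  have g: "g \<in> isotropy G y"
    unfolding g_def isotropy_iff using ab ab' hG h ch by simp
  have ga: "cmp G g a = cmp G a' h"
    unfolding g_def using ab ab' hG h ch by (simp add: assoc)
  have "cmp G h (cmp G (ginv G a) b) = cmp G (cmp G (ginv G a') b') (ginv G k)"
    using hk cmp_cmp_ginv_cancel[of k "cmp G h (cmp G (ginv G a) b)"] ab hG h ch kG k by simp
  then have gb: "cmp G g b = cmp G b' (ginv G k)"
    unfolding g_def using ab ab' hG h ch kG k dk by (simp add: assoc)
  have "coset_act G g (left_coset G H a) = left_coset G H a'"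
    using H.coset_act_left_coset[of g a] g ab ab' ga H.left_coset_eq[of a' "cmp G a' h"]
      H.left_coset_memI[of a' h] h ch by (simp add: isotropy_iff)
  moreover have "coset_act G g (left_coset G K b) = left_coset G K b'"
    using K.coset_act_left_coset[of g b] g ab ab' gb K.left_coset_eq[of b' "cmp G b' (ginv G k)"]
      K.left_coset_memI[of b' "ginv G k"] k kG dk by (simp add: isotropy_iff)
  ultimately show ?thesis using g ab ab' by auto
qed

definition coset_pair_action :: "'o \<Rightarrow> 'm \<Rightarrow> 'm set \<times> 'm set \<Rightarrow> 'm set \<times> 'm set" where
  "coset_pair_action y g = restrict (map_prod (coset_act G g) (coset_act G g)) (coset_pairs y)"

lemma coset_pair_act_in_coset_pairs:
  assumes "g \<in> isotropy G y" "p \<in> coset_pairs y"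
  shows "map_prod (coset_act G g) (coset_act G g) p \<in> coset_pairs y"
  using assms H.coset_act_in_coset_space[of g "fst p"] K.coset_act_in_coset_space[of g "snd p"]
  by (cases p) (auto simp: isotropy_iff)

lemma group_action_coset_pairs:
  assumes y: "y \<in> obj G"
  shows "group_action (isotropy_group G y) (coset_pairs y) (coset_pair_action y)"
  unfolding coset_pair_action_def
proof (rule group_actionI[OF group_isotropy_group[OF y]])
  fix g p assume "g \<in> carrier (isotropy_group G y)" "p \<in> coset_pairs y"
  then show "map_prod (coset_act G g) (coset_act G g) p \<in> coset_pairs y"
    using coset_pair_act_in_coset_pairs by (simp add: isotropy_group_def)
next
  fix p assume "p \<in> coset_pairs y"
  then show "map_prod (coset_act G \<one>\<^bsub>isotropy_group G y\<^esub>) (coset_act G \<one>\<^bsub>isotropy_group G y\<^esub>) p = p"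
    using H.coset_act_idn K.coset_act_idn by (auto simp: isotropy_group_def)
next
  fix g h p assume "g \<in> carrier (isotropy_group G y)" "h \<in> carrier (isotropy_group G y)" "p \<in> coset_pairs y"
  then show "map_prod (coset_act G (g \<otimes>\<^bsub>isotropy_group G y\<^esub> h)) (coset_act G (g \<otimes>\<^bsub>isotropy_group G y\<^esub> h)) p
      = map_prod (coset_act G g) (coset_act G g) (map_prod (coset_act G h) (coset_act G h) p)"
    using H.coset_act_cmp[of g h "fst p"] K.coset_act_cmp[of g h "snd p"]
    by (cases p) (auto simp: isotropy_group_def isotropy_iff)
qed

lemma orbit_coset_pairs:
  assumes y: "y \<in> obj G" and p: "p \<in> coset_pairs y"
  shows "orbit (isotropy_group G y) (coset_pair_action y) p
    = {q \<in> coset_pairs y. pair_double_coset G H K q = pair_double_coset G H K p}"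
proof -
  have "orbit (isotropy_group G y) (coset_pair_action y) p
      = (\<lambda>g. map_prod (coset_act G g) (coset_act G g) p) ` isotropy G y"
    unfolding orbit_def coset_pair_action_def isotropy_group_def using p by auto
  also have "\<dots> = {q \<in> coset_pairs y. pair_double_coset G H K q = pair_double_coset G H K p}"
  proof
    show "(\<lambda>g. map_prod (coset_act G g) (coset_act G g) p) ` isotropy G y
        \<subseteq> {q \<in> coset_pairs y. pair_double_coset G H K q = pair_double_coset G H K p}"
      using coset_pair_act_in_coset_pairs pair_double_coset_act p by auto
    show "{q \<in> coset_pairs y. pair_double_coset G H K q = pair_double_coset G H K p}
        \<subseteq> (\<lambda>g. map_prod (coset_act G g) (coset_act G g) p) ` isotropy G y"
    proof
      fix q assume "q \<in> {q \<in> coset_pairs y. pair_double_coset G H K q = pair_double_coset G H K p}"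
      then obtain g where "g \<in> isotropy G y" "map_prod (coset_act G g) (coset_act G g) p = q"
        using same_orbit_if_pair_double_coset_eq[OF p] by force
      then show "q \<in> (\<lambda>g. map_prod (coset_act G g) (coset_act G g) p) ` isotropy G y" by blast
    qed
  qed
  finally show ?thesis .
qed

lemma card_orbits_coset_pairs:
  assumes y: "y \<in> obj G"
  shows "card (orbits (isotropy_group G y) (coset_pairs y) (coset_pair_action y)) = card (double_cosets G H K)"
proof -
  define fibre where "fibre D = {q \<in> coset_pairs y. pair_double_coset G H K q = D}" for D
  have "orbits (isotropy_group G y) (coset_pairs y) (coset_pair_action y)
      = (\<lambda>p. orbit (isotropy_group G y) (coset_pair_action y) p) ` coset_pairs y"
    unfolding orbits_def by blast
  also have "\<dots> = fibre ` pair_double_coset G H K ` coset_pairs y"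
    unfolding image_image fibre_def using orbit_coset_pairs[OF y] by (intro image_cong) auto
  also have "pair_double_coset G H K ` coset_pairs y = double_cosets G H K"
    using pair_double_coset_in_double_cosets pair_double_coset_surj[OF y] by blast
  finally have orbits: "orbits (isotropy_group G y) (coset_pairs y) (coset_pair_action y)
      = fibre ` double_cosets G H K" .
  have "inj_on fibre (double_cosets G H K)"
  proof (rule inj_onI)
    fix D D' assume D: "D \<in> double_cosets G H K" and "fibre D = fibre D'"
    obtain p where "p \<in> coset_pairs y" "pair_double_coset G H K p = D"
      using pair_double_coset_surj[OF y D] .
    then show "D = D'" using \<open>fibre D = fibre D'\<close> unfolding fibre_def by blast
  qed
  then show ?thesis unfolding orbits by (rule card_image)
qed

theorem card_double_cosets_burnside:
  assumes y: "y \<in> obj G"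
  shows "card (double_cosets G H K) * card (isotropy G y)
    = (\<Sum>g\<in>isotropy G y. card {C \<in> coset_space G H y. coset_act G g C = C}
                        * card {D \<in> coset_space G K y. coset_act G g D = D})"
proof -
  have invariants: "invariants (coset_pairs y) (coset_pair_action y) g
      = {C \<in> coset_space G H y. coset_act G g C = C} \<times> {D \<in> coset_space G K y. coset_act G g D = D}"
    for g unfolding invariants_def coset_pair_action_def by auto
  have finite: "finite (coset_pairs y)" using H.finite_coset_space K.finite_coset_space by simp
  show ?thesis
    using group_action.burnside[OF group_action_coset_pairs[OF y] _ finite] finite_isotropy
      card_orbits_coset_pairs[OF y]
    by (simp add: invariants card_cartesian_product order_def isotropy_group_def)
qed

end

theorem corollary5p5:
  fixes G H K :: "('o, 'm) gpd"
    and dI dJ :: "'o \<Rightarrow> nat" and I J :: "'m \<Rightarrow> complex mat" and \<eta> \<theta> :: "'o \<Rightarrow> complex mat"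
  assumes "groupoid G"
    and "wide_subgroupoid G H" and "connected_gpd H"
    and "wide_subgroupoid G K" and "connected_gpd K"
    and "is_induction G H triv_dim triv_rep dI I \<eta>"
    and "is_induction G K triv_dim triv_rep dJ J \<theta>"
  shows "of_nat (card (double_cosets G H K)) =
           char_inner G (character G dI I) (character G dJ J)"
proof -
  interpret finite_groupoid G by (rule finite_groupoid.intro) fact
  interpret two_wide_connected_subgroupoids G H K
    by (intro_locales; simp add: wide_connected_subgroupoid_axioms_def assms)
  interpret ind_H: trivial_induction G H dI I \<eta>
    by (intro_locales; simp add: trivial_induction_axioms_def assms)
  interpret ind_K: trivial_induction G K dJ J \<theta>
    by (intro_locales; simp add: trivial_induction_axioms_def assms)
  have "(\<Sum>g\<in>isotropy G y. character G dI I g * cnj (character G dJ J g))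
      = of_nat (card (double_cosets G H K)) * of_nat (card (isotropy G y))" if y: "y \<in> obj G" for y
    using card_double_cosets_burnside[OF y]
    by (simp add: ind_H.character_eq_card_fixed_cosets ind_K.character_eq_card_fixed_cosets
        flip: of_nat_mult of_nat_sum)
  then show ?thesis
    unfolding char_inner_def using card_isotropy_pos finite_obj obj_nonempty by simp
qed

end
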